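(* Let $n\ge 2$, $P_{\max}>0$, $g_{i,i}>0$ and $g_{i,j}\ge 0$ for all $i,j\in\{1,\dots,n\}$. For $\mathbf P\in[0,P_{\max}]^n$ let $\mathbf R(\mathbf P)=(R_1(\mathbf P),\dots,R_n(\mathbf P))$. Define the power-control rate region $$\mathcal A=\{\mathbf r\in\mathbb R_{\ge0}^n:\ \exists\,\mathbf P\in[0,P_{\max}]^n \text{ with } \mathbf r\le \mathbf R(\mathbf P)\text{ componentwise}\}.$$ For each $i$ define the hyper-surface $\Phi_i=\{\mathbf R(\mathbf P):\mathbf P\in[0,P_{\max}]^n,\ P_i=P_{\max}\}$ and the region $$\mathcal R_i=\{\mathbf r\in\mathbb R^n_{\ge 0}: \exists\,\mathbf x\in\Phi_i,\ \mathbf r\le\mathbf x \text{ componentwise}\}.$$ Then $\mathcal A=\bigcup_{i=1}^n\mathcal R_i$. Consequently, the achievable rate region $\mathcal R=\mathrm{Conv}(\mathcal A)$ satisfies $$\mathcal R=\mathrm{Conv}\Big(\bigcup_{i=1}^n\mathcal R_i\Big).$$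
   Context: This is the $n$-user interference channel with interference treated as noise. Transmitter $i$ uses power $P_i\in[0,P_{\max}]$. The quantity $g_{i,j}$ is the channel power gain from transmitter $j$ to receiver $i$, normalized by the (unit) noise variance. The rate of pair $i$ is $$R_i(\mathbf P)=\log_2\!\left(1+\frac{g_{i,i}P_i}{1+\sum_{j\ne i}g_{i,j}P_j}\right).$$ $\mathrm{Conv}$ denotes the convex hull; taking it corresponds to time-sharing between operating points. *)

theory Defs
  imports "HOL-Analysis.Analysis"
begin

text \<open>Rate of pair i under power vector P (interference treated as noise, unit noise).\<close>
definition rate :: "('n::finite \<Rightarrow> 'n \<Rightarrow> real) \<Rightarrow> real^'n \<Rightarrow> 'n \<Rightarrow> real" where
  "rate g P i = log 2 (1 + g i i * P $ i / (1 + (\<Sum>j\<in>UNIV - {i}. g i j * P $ j)))"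

definition rate_vec :: "('n::finite \<Rightarrow> 'n \<Rightarrow> real) \<Rightarrow> real^'n \<Rightarrow> real^'n" where
  "rate_vec g P = (\<chi> i. rate g P i)"

definition power_set :: "real \<Rightarrow> (real^'n::finite) set" where
  "power_set Pmax = {P. \<forall>i. 0 \<le> P $ i \<and> P $ i \<le> Pmax}"

definition pc_region :: "('n::finite \<Rightarrow> 'n \<Rightarrow> real) \<Rightarrow> real \<Rightarrow> (real^'n) set" where
  "pc_region g Pmax = {r. (\<forall>i. 0 \<le> r $ i) \<and>
      (\<exists>P\<in>power_set Pmax. \<forall>i. r $ i \<le> rate_vec g P $ i)}"

definition Phi :: "('n::finite \<Rightarrow> 'n \<Rightarrow> real) \<Rightarrow> real \<Rightarrow> 'n \<Rightarrow> (real^'n) set" where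
  "Phi g Pmax i = {rate_vec g P | P. P \<in> power_set Pmax \<and> P $ i = Pmax}"

definition R_region :: "('n::finite \<Rightarrow> 'n \<Rightarrow> real) \<Rightarrow> real \<Rightarrow> 'n \<Rightarrow> (real^'n) set" where
  "R_region g Pmax i = {r. (\<forall>k. 0 \<le> r $ k) \<and>
      (\<exists>x\<in>Phi g Pmax i. \<forall>k. r $ k \<le> x $ k)}"

end

theory Submission
  imports Defs
begin

(*
  Scaling a power vector up by a factor c \<ge> 1 never decreases any
  rate: the SINR  a / (1 + S)  of a link becomes  c a / (1 + c S), which is at
  least as large because the noise term 1 does not scale.  Given any admissible
  power vector P, scale it by  Pmax / max_k P_k  (or, if P = 0, replace it by
  the constant vector Pmax): the result is admissible, some transmitter uses
  full power Pmax, and every rate dominates the corresponding rate under P.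
  Hence every point of the power-control region A lies below a point of some
  hyper-surface Phi_i, i.e. A is contained in the union of the regions R_i; the
  converse inclusion is immediate from the definitions.
*)

text \<open>The SINR of a link grows when all powers are multiplied by c \<ge> 1,
  since the unit noise floor stays fixed.\<close>
lemma sinr_scale_mono:
  fixes a S c :: real
  assumes "0 \<le> a" "0 \<le> S" "1 \<le> c"
  shows "a / (1 + S) \<le> c * a / (1 + c * S)"
proof -
  have "a * (1 + c * S) = a + c * a * S" "c * a * (1 + S) = c * a + c * a * S"
    by (simp_all add: algebra_simps)
  moreover have "a \<le> c * a"
    using assms by (simp add: mult_le_cancel_right1)
  ultimately have "a * (1 + c * S) \<le> c * a * (1 + S)" by simp
  moreover have "0 < 1 + S" "0 < 1 + c * S"
    using assms by (auto intro: add_pos_nonneg)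
  ultimately show ?thesis by (simp add: divide_simps)
qed

lemma rate_nonneg:
  assumes "\<And>i j. 0 \<le> g i j" "\<And>j. 0 \<le> P $ j"
  shows "0 \<le> rate g P k"
proof -
  have "0 \<le> (\<Sum>j\<in>UNIV - {k}. g k j * P $ j)"
    using assms by (intro sum_nonneg) simp
  moreover have "0 \<le> g k k * P $ k" using assms by simp
  ultimately have "1 \<le> 1 + g k k * P $ k / (1 + (\<Sum>j\<in>UNIV - {k}. g k j * P $ j))"
    by simp
  then show ?thesis unfolding rate_def by simp
qed

lemma rate_scale_mono:
  assumes "\<And>i j. 0 \<le> g i j" "\<And>j. 0 \<le> P $ j" "1 \<le> c"
  shows "rate g P k \<le> rate g (c *\<^sub>R P) k"
proof -
  define S where "S = (\<Sum>j\<in>UNIV - {k}. g k j * P $ j)"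
  define a where "a = g k k * P $ k"
  have S0: "0 \<le> S" unfolding S_def using assms by (intro sum_nonneg) simp
  have a0: "0 \<le> a" unfolding a_def using assms by simp
  have scaled_S: "(\<Sum>j\<in>UNIV - {k}. g k j * (c *\<^sub>R P) $ j) = c * S"
    unfolding S_def by (simp add: sum_distrib_left algebra_simps)
  have scaled_a: "g k k * (c *\<^sub>R P) $ k = c * a" unfolding a_def by simp
  have "0 < 1 + a / (1 + S)" using a0 S0 by (simp add: add_pos_nonneg)
  then have "log 2 (1 + a / (1 + S)) \<le> log 2 (1 + c * a / (1 + c * S))"
    using sinr_scale_mono[OF a0 S0 assms(3)] by simp
  then show ?thesis
    unfolding rate_def scaled_S scaled_a S_def[symmetric] a_def[symmetric] .
qed

lemma full_power_dominates:
  fixes P :: "real^'n::finite"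
  assumes "0 < Pmax" "\<And>i j. 0 \<le> g i j" "P \<in> power_set Pmax"
  obtains i Q where "Q \<in> power_set Pmax" "Q $ i = Pmax"
    "\<And>k. rate g P k \<le> rate g Q k"
proof -
  have P0: "\<And>k. 0 \<le> P $ k" and Pmax_ge: "\<And>k. P $ k \<le> Pmax"
    using assms(3) by (auto simp: power_set_def)
  define m where "m = Max (range (\<lambda>k. P $ k))"
  have "m \<in> range (\<lambda>k. P $ k)" unfolding m_def by (rule Max_in) auto
  then obtain i where Pi: "P $ i = m" by auto
  have below_m: "\<And>k. P $ k \<le> m" unfolding m_def by simp
  show thesis
  proof (cases "m = 0")
    case True
    define Q :: "real^'n" where "Q = (\<chi> k. Pmax)"
    have Q: "Q \<in> power_set Pmax" using assms(1) by (simp add: Q_def power_set_def)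
    have "\<And>k. P $ k = 0" using below_m P0 True by (simp add: order_antisym)
    then have "\<And>k. rate g P k = 0" by (simp add: rate_def)
    moreover have "\<And>k. 0 \<le> rate g Q k"
      using rate_nonneg[of g, OF assms(2)] assms(1) by (simp add: Q_def)
    ultimately have "\<And>k. rate g P k \<le> rate g Q k" by simp
    then show thesis using that Q by (simp add: Q_def)
  next
    case False
    have m_pos: "0 < m" using False P0 Pi by (metis order_le_less)
    define c where "c = Pmax / m"
    have c1: "1 \<le> c" using Pmax_ge[of i] Pi m_pos by (simp add: c_def)
    have "c * P $ k \<le> Pmax" for k
    proof -
      have "c * P $ k \<le> c * m" using below_m c1 by (intro mult_left_mono) auto
      then show ?thesis using m_pos by (simp add: c_def)
    qed
    then have "c *\<^sub>R P \<in> power_set Pmax"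
      using P0 c1 by (simp add: power_set_def)
    moreover have "(c *\<^sub>R P) $ i = Pmax" using Pi m_pos by (simp add: c_def)
    ultimately show thesis
      using that rate_scale_mono[of g, OF assms(2) P0 c1] by blast
  qed
qed

lemma pc_region_eq_union:
  assumes "0 < Pmax" "\<And>i j. 0 \<le> g i j"
  shows "pc_region g Pmax = (\<Union>i. R_region g Pmax i)"
proof
  show "(\<Union>i. R_region g Pmax i) \<subseteq> pc_region g Pmax"
    unfolding R_region_def Phi_def pc_region_def by blast
next
  show "pc_region g Pmax \<subseteq> (\<Union>i. R_region g Pmax i)"
  proof
    fix r assume "r \<in> pc_region g Pmax"
    then obtain P where r0: "\<forall>k. 0 \<le> r $ k" and P: "P \<in> power_set Pmax"
      and below_P: "\<forall>k. r $ k \<le> rate g P k"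
      unfolding pc_region_def rate_vec_def by auto
    obtain i Q where Q: "Q \<in> power_set Pmax" "Q $ i = Pmax"
      and dom: "\<And>k. rate g P k \<le> rate g Q k"
      using full_power_dominates[of Pmax g, OF assms P] by blast
    have "rate_vec g Q \<in> Phi g Pmax i" using Q by (auto simp: Phi_def)
    moreover have "\<forall>k. r $ k \<le> rate_vec g Q $ k"
      using below_P dom by (auto simp: rate_vec_def intro: order_trans)
    ultimately show "r \<in> (\<Union>i. R_region g Pmax i)"
      using r0 unfolding R_region_def by blast
  qed
qed

theorem theorem1:
  fixes g :: "'n::finite \<Rightarrow> 'n \<Rightarrow> real" and Pmax :: real
  assumes "CARD('n) \<ge> 2"
    and "Pmax > 0"
    and "\<And>i. g i i > 0"
    and "\<And>i j. g i j \<ge> 0"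
  shows "pc_region g Pmax = (\<Union>i. R_region g Pmax i)
    \<and> convex hull (pc_region g Pmax) = convex hull (\<Union>i. R_region g Pmax i)"
  using pc_region_eq_union[of Pmax g, OF assms(2,4)] by simp

end
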